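(* Let $\mathcal{A}\in\mathbb{R}^{d_1\times\cdots\times d_k}$ be an order-$k$ real tensor and $\pi\in\mathcal{P}_{[k]}$. If $\mathcal{A}$ is $\pi$-OD, then for every partition $\tau$ in the upper cone $U_\pi=\{\tau\in\mathcal{P}_{[k]}:\ \pi\le\tau<\mathbf{1}_{[k]}\}$, \[ \|\mathrm{Unfold}_\tau(\mathcal{A})\|_\sigma=\|\mathrm{Unfold}_\pi(\mathcal{A})\|_\sigma . \]
   Context: $\mathcal{P}_{[k]}$ is the set of partitions of $[k]$, ordered by refinement ($\pi\le\tau$ if every block of $\pi$ lies in a block of $\tau$; $\tau<\mathbf{1}_{[k]}$ means $\tau\ne\{[k]\}$). $\mathcal{A}$ is $\pi$-orthogonal decomposable ($\pi$-OD) if $\mathcal{A}=\sum_{n=1}^r\lambda_n\mathbf{a}^{(n)}_1\otimes\cdots\otimes\mathbf{a}^{(n)}_k$ with $\lambda_1\ge\cdots\ge\lambda_r\ge0$, $\mathbf{a}^{(n)}_i\in\mathbb{R}^{d_i}$, and $\langle\otimes_{i\in B}\mathbf{a}^{(n)}_i,\otimes_{i\in B}\mathbf{a}^{(m)}_i\rangle=\delta_{nm}$ for all $B\in\pi$, $n,m\in[r]$. For a real tensor $\mathcal{T}\in\mathbb{R}^{e_1\times\cdots\times e_m}$, $\|\mathcal{T}\|_\sigma=\sup\{\sum t_{i_1\dots i_m}x^{(1)}_{i_1}\cdots x^{(m)}_{i_m}:\ \|\mathbf{x}_n\|_2=1\}$. Unfolding: for $\pi=\{B_1,\dots,B_\ell\}$,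 $\mathrm{Unfold}_\pi(\mathcal{A})$ is the order-$\ell$ tensor of dimensions $(\prod_{j\in B_1}d_j,\dots,\prod_{j\in B_\ell}d_j)$ whose entry at $(m_1,\dots,m_\ell)$ is $a_{i_1\dots i_k}$, where $m_j$ corresponds to $(i_r)_{r\in B_j}$ under a fixed bijection $\prod_{r\in B_j}[d_r]\to[\prod_{r\in B_j}d_r]$. *)

theory Defs
  imports "HOL-Analysis.Analysis" "HOL-Library.Disjoint_Sets"
begin

text \<open>Order-k real tensor with dimensions d 0, ..., d (k-1): a function A on index
tuples; only its values on index_set k d (i-th index below d i) are meaningful.\<close>

definition index_set :: "nat \<Rightarrow> (nat \<Rightarrow> nat) \<Rightarrow> (nat \<Rightarrow> nat) set" where
  "index_set k d = PiE {..<k} (\<lambda>i. {..<d i})"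

definition partitions :: "nat \<Rightarrow> nat set set set" where
  "partitions k = {P. partition_on {..<k} P}"

definition refines :: "nat set set \<Rightarrow> nat set set \<Rightarrow> bool" where
  "refines \<pi> \<tau> \<longleftrightarrow> (\<forall>B\<in>\<pi>. \<exists>C\<in>\<tau>. B \<subseteq> C)"

definition block_inner :: "(nat \<Rightarrow> nat) \<Rightarrow> nat set \<Rightarrow> (nat \<Rightarrow> nat \<Rightarrow> real) \<Rightarrow> (nat \<Rightarrow> nat \<Rightarrow> real) \<Rightarrow> real" where
  "block_inner d B x y =
     (\<Sum>j\<in>PiE B (\<lambda>i. {..<d i}). (\<Prod>i\<in>B. x i (j i)) * (\<Prod>i\<in>B. y i (j i)))"

definition pi_OD :: "nat \<Rightarrow> (nat \<Rightarrow> nat) \<Rightarrow> nat set set \<Rightarrow> ((nat \<Rightarrow> nat) \<Rightarrow> real) \<Rightarrow> bool" where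
  "pi_OD k d \<pi> A \<longleftrightarrow>
    (\<exists>(r::nat) (lam::nat \<Rightarrow> real) (a::nat \<Rightarrow> nat \<Rightarrow> nat \<Rightarrow> real).
        (\<forall>n m. 1 \<le> n \<longrightarrow> n \<le> m \<longrightarrow> m \<le> r \<longrightarrow> lam m \<le> lam n)
      \<and> (\<forall>n. 1 \<le> n \<longrightarrow> n \<le> r \<longrightarrow> 0 \<le> lam n)
      \<and> (\<forall>idx\<in>index_set k d. A idx = (\<Sum>n=1..r. lam n * (\<Prod>i<k. a n i (idx i))))
      \<and> (\<forall>B\<in>\<pi>. \<forall>n\<in>{1..r}. \<forall>m\<in>{1..r}.
            block_inner d B (a n) (a m) = (if n = m then 1 else 0)))"

definition spectral_norm :: "'m set \<Rightarrow> ('m \<Rightarrow> 'j set) \<Rightarrow> (('m \<Rightarrow> 'j) \<Rightarrow> real) \<Rightarrow> real" where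
  "spectral_norm M I T = Sup {(\<Sum>t\<in>PiE M I. T t * (\<Prod>m\<in>M. x m (t m))) | x.
        \<forall>m\<in>M. (\<Sum>j\<in>I m. (x m j)\<^sup>2) = 1}"

text \<open>Unfolding along a partition \<tau>: one mode per block B, whose index set is the set of
  multi-indices (i_r) for r in B (this plays the role of [prod_{r in B} d_r] under the
  fixed bijection).\<close>

definition block_of :: "nat set set \<Rightarrow> nat \<Rightarrow> nat set" where
  "block_of \<tau> i = (THE B. B \<in> \<tau> \<and> i \<in> B)"

definition unfold_idx :: "nat set set \<Rightarrow> (nat set \<Rightarrow> nat \<Rightarrow> nat) \<Rightarrow> nat \<Rightarrow> nat" where
  "unfold_idx \<tau> t = (\<lambda>i. if i \<in> \<Union>\<tau> then t (block_of \<tau> i) i else undefined)"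

definition unfold_norm :: "(nat \<Rightarrow> nat) \<Rightarrow> nat set set \<Rightarrow> ((nat \<Rightarrow> nat) \<Rightarrow> real) \<Rightarrow> real" where
  "unfold_norm d \<tau> A =
     spectral_norm \<tau> (\<lambda>B. PiE B (\<lambda>i. {..<d i})) (\<lambda>t. A (unfold_idx \<tau> t))"

end

theory Submission
  imports Defs
begin

text \<open>Write A as the sum over n of lam n times the rank-one tensor of the vectors a n i.
  The inner product of two rank-one tensors over a disjoint union of blocks is the product of
  the blockwise inner products, so the factors stay orthonormal on the blocks of any partition
  coarser than \<pi>. It thus suffices to show that the unfolding along any partition with at
  least two blocks, on whose blocks the factors are orthonormal, has spectral norm lam 1.
  Against unit vectors x C the unfolding evaluates to the sum over n of lam n times the
  product over the blocks C of the coefficients c n C of x C along the n-th factor. Bessel's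
  inequality bounds the square sum of the c n C by 1 for each C, so each product is at most
  the mean of the squared coefficients on two fixed blocks, and the total is at most lam 1;
  the first factors attain it.\<close>

lemma block_inner_eq_prod:
  assumes "finite B"
  shows "block_inner d B x y = (\<Prod>i\<in>B. \<Sum>v<d i. x i v * y i v)"
  unfolding block_inner_def
  by (subst prod_sum_PiE) (auto simp: assms prod.distrib)

lemma block_inner_partition:
  assumes "finite C" and "partition_on C P"
  shows "block_inner d C x y = (\<Prod>B\<in>P. block_inner d B x y)"
proof -
  have fin: "finite B" if "B \<in> P" for B
    using assms partition_onD1 that by (metis Union_upper finite_subset)
  have "block_inner d C x y = (\<Prod>B\<in>P. \<Prod>i\<in>B. \<Sum>v<d i. x i v * y i v)"
    using prod.partition[OF assms] block_inner_eq_prod[OF assms(1)] by simp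
  also have "\<dots> = (\<Prod>B\<in>P. block_inner d B x y)"
    using block_inner_eq_prod[OF fin] by simp
  finally show ?thesis .
qed

lemma block_inner_orthonormal_refines:
  assumes "Disjoint_Sets.refines A \<pi> \<tau>" and "finite A"
    and "\<forall>B\<in>\<pi>. \<forall>n\<in>N. \<forall>m\<in>N. block_inner d B (a n) (a m) = (if n = m then 1 else 0)"
  shows "\<forall>C\<in>\<tau>. \<forall>n\<in>N. \<forall>m\<in>N. block_inner d C (a n) (a m) = (if n = m then 1 else 0)"
proof (intro ballI)
  fix C n m assume C: "C \<in> \<tau>" and nm: "n \<in> N" "m \<in> N"
  let ?P = "{B \<in> \<pi>. B \<subseteq> C}"
  have part: "partition_on C ?P"
    using assms(1) C by (rule refines_obtains_subset)
  have C_sub: "C \<subseteq> A" and "C \<noteq> {}"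
    using assms(1) C by (auto simp: Disjoint_Sets.refines_def partition_on_def)
  then have "?P \<noteq> {}"
    using part by (auto simp: partition_on_def)
  have "finite ?P"
    using finite_elements[OF assms(2)] assms(1) by (simp add: Disjoint_Sets.refines_def)
  have "finite C"
    using C_sub assms(2) finite_subset by blast
  then have "block_inner d C (a n) (a m) = (\<Prod>B\<in>?P. if n = m then 1 else 0)"
    using block_inner_partition[OF _ part] assms(3) nm by simp
  also have "\<dots> = (if n = m then 1 else 0)"
    using \<open>?P \<noteq> {}\<close> \<open>finite ?P\<close> by (simp add: card_gt_0_iff)
  finally show "block_inner d C (a n) (a m) = (if n = m then 1 else 0)" .
qed

lemma block_of_eq:
  assumes "partition_on A \<rho>" and "C \<in> \<rho>" and "i \<in> C"
  shows "block_of \<rho> i = C"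
  unfolding block_of_def
proof (rule the_equality)
  fix B assume "B \<in> \<rho> \<and> i \<in> B"
  then show "B = C"
    using assms disjointD[OF partition_onD2[OF assms(1)]] by blast
qed (use assms in blast)

lemma unfold_idx_in_index_set:
  assumes "partition_on {..<k} \<rho>" and "t \<in> PiE \<rho> (\<lambda>B. PiE B (\<lambda>i. {..<d i}))"
  shows "unfold_idx \<rho> t \<in> index_set k d"
  unfolding index_set_def
proof (rule PiE_I)
  fix i assume "i \<in> {..<k}"
  then obtain C where C: "C \<in> \<rho>" "i \<in> C"
    using partition_onD1[OF assms(1)] by blast
  then show "unfold_idx \<rho> t i \<in> {..<d i}"
    using assms(2) block_of_eq[OF assms(1) C] by (auto simp: unfold_idx_def)
qed (use partition_onD1[OF assms(1)] in \<open>auto simp: unfold_idx_def\<close>)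

lemma prod_unfold_idx:
  assumes "partition_on {..<k} \<rho>"
  shows "(\<Prod>i<k. g i (unfold_idx \<rho> t i)) = (\<Prod>C\<in>\<rho>. \<Prod>i\<in>C. g i (t C i))"
proof -
  have "(\<Prod>i<k. g i (unfold_idx \<rho> t i)) = (\<Prod>C\<in>\<rho>. \<Prod>i\<in>C. g i (unfold_idx \<rho> t i))"
    using prod.partition[OF _ assms] by simp
  also have "\<dots> = (\<Prod>C\<in>\<rho>. \<Prod>i\<in>C. g i (t C i))"
    using block_of_eq[OF assms] by (intro prod.cong refl) (auto simp: unfold_idx_def)
  finally show ?thesis .
qed

lemma partition_on_two_blocks:
  assumes "partition_on A \<rho>" and "A \<noteq> {}" and "\<rho> \<noteq> {A}"
  obtains C1 C2 where "C1 \<in> \<rho>" "C2 \<in> \<rho>" "C1 \<noteq> C2"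
proof -
  obtain C1 where "C1 \<in> \<rho>"
    using assms(1,2) partition_onD1 by blast
  moreover have "\<rho> \<noteq> {C1}"
  proof
    assume "\<rho> = {C1}"
    then show False
      using partition_onD1[OF assms(1)] assms(3) by simp
  qed
  ultimately show ?thesis
    using that by blast
qed

lemma refines_single_block:
  assumes "Disjoint_Sets.refines A {A} \<tau>"
  shows "\<tau> = {A}"
proof (rule refines_asym[OF _ assms])
  show "Disjoint_Sets.refines A \<tau> {A}"
    using assms by (auto simp: Disjoint_Sets.refines_def partition_on_def)
qed

lemma unfold_norm_zero_dim:
  assumes "partition_on {..<k} \<rho>" and "i < k" and "d i = 0"
  shows "unfold_norm d \<rho> A = Sup {}"
proof -
  obtain C where C: "C \<in> \<rho>" "i \<in> C"
    using partition_onD1[OF assms(1)] assms(2) by blast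
  then have "PiE C (\<lambda>i. {..<d i}) = {}"
    using assms(3) by (auto simp: PiE_eq_empty_iff)
  with C show ?thesis
    unfolding unfold_norm_def spectral_norm_def by (intro arg_cong[where f = Sup]) fastforce
qed

lemma unfold_norm_degenerate:
  assumes "partition_on {..<k} \<pi>" and "partition_on {..<k} \<tau>"
    and "\<not> (0 < k \<and> (\<forall>i<k. 0 < d i))"
  shows "unfold_norm d \<tau> A = unfold_norm d \<pi> A"
proof (cases "k = 0")
  case True
  then show ?thesis
    using assms(1,2) by (simp add: partition_on_empty)
next
  case False
  then obtain i where "i < k" "d i = 0"
    using assms(3) by auto
  then show ?thesis
    using unfold_norm_zero_dim[OF assms(1)] unfold_norm_zero_dim[OF assms(2)] by metis
qed

lemma bessel_inequality:
  fixes u :: "'n \<Rightarrow> 's \<Rightarrow> real"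
  assumes "finite S" and "finite N"
    and orthonormal: "\<And>n m. n \<in> N \<Longrightarrow> m \<in> N \<Longrightarrow> (\<Sum>s\<in>S. u n s * u m s) = (if n = m then 1 else 0)"
  shows "(\<Sum>n\<in>N. (\<Sum>s\<in>S. u n s * x s)\<^sup>2) \<le> (\<Sum>s\<in>S. (x s)\<^sup>2)"
proof -
  define c where "c n = (\<Sum>s\<in>S. u n s * x s)" for n
  define p where "p s = (\<Sum>n\<in>N. c n * u n s)" for s
  have "(\<Sum>s\<in>S. x s * p s) = (\<Sum>n\<in>N. c n * (\<Sum>s\<in>S. u n s * x s))"
    by (simp add: p_def sum_distrib_left sum_distrib_right sum.swap[of _ S] mult_ac)
  then have cross: "(\<Sum>s\<in>S. x s * p s) = (\<Sum>n\<in>N. (c n)\<^sup>2)"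
    by (simp add: c_def power2_eq_square)
  have "(\<Sum>s\<in>S. (p s)\<^sup>2) = (\<Sum>s\<in>S. \<Sum>n\<in>N. \<Sum>m\<in>N. c n * c m * (u n s * u m s))"
    by (simp add: p_def power2_eq_square sum_product mult_ac)
  also have "\<dots> = (\<Sum>n\<in>N. \<Sum>m\<in>N. c n * c m * (\<Sum>s\<in>S. u n s * u m s))"
    by (simp add: sum_distrib_left sum.swap[of _ S])
  also have "\<dots> = (\<Sum>n\<in>N. (c n)\<^sup>2)"
    using assms(2) by (simp add: orthonormal power2_eq_square if_distrib cong: if_cong)
  finally have proj: "(\<Sum>s\<in>S. (p s)\<^sup>2) = (\<Sum>n\<in>N. (c n)\<^sup>2)" .
  have "0 \<le> (\<Sum>s\<in>S. (x s - p s)\<^sup>2)"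
    by (intro sum_nonneg) simp
  also have "\<dots> = (\<Sum>s\<in>S. (x s)\<^sup>2) - 2 * (\<Sum>s\<in>S. x s * p s) + (\<Sum>s\<in>S. (p s)\<^sup>2)"
    by (simp add: power2_diff sum.distrib sum_subtractf sum_distrib_left mult_ac)
  finally show ?thesis
    using cross proj by (simp add: c_def)
qed

lemma prod_le_mean_square_of_two:
  fixes f :: "'a \<Rightarrow> real"
  assumes "finite R" and "C1 \<in> R" and "C2 \<in> R" and "C1 \<noteq> C2"
    and "\<And>C. C \<in> R \<Longrightarrow> \<bar>f C\<bar> \<le> 1"
  shows "(\<Prod>C\<in>R. f C) \<le> ((f C1)\<^sup>2 + (f C2)\<^sup>2) / 2"
proof -
  have "(\<Prod>C\<in>R. f C) \<le> (\<Prod>C\<in>R. \<bar>f C\<bar>)"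
    by (simp add: abs_prod[symmetric])
  also have "\<dots> = \<bar>f C1\<bar> * (\<bar>f C2\<bar> * (\<Prod>C\<in>R - {C1} - {C2}. \<bar>f C\<bar>))"
    using assms by (simp add: prod.remove[of R C1] prod.remove[of "R - {C1}" C2])
  also have "\<dots> \<le> \<bar>f C1\<bar> * (\<bar>f C2\<bar> * 1)"
    using assms by (intro mult_left_mono prod_le_1) auto
  also have "\<dots> \<le> ((f C1)\<^sup>2 + (f C2)\<^sup>2) / 2"
    using sum_squares_bound[of "\<bar>f C1\<bar>" "\<bar>f C2\<bar>"] by (simp add: power2_eq_square)
  finally show ?thesis .
qed

lemma sum_weighted_prod_le_top_weight:
  fixes lam :: "nat \<Rightarrow> real" and c :: "nat \<Rightarrow> 'b \<Rightarrow> real"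
  assumes "finite R" and "C1 \<in> R" and "C2 \<in> R" and "C1 \<noteq> C2" and "1 \<le> r"
    and lam_le: "\<And>n. n \<in> {1..r} \<Longrightarrow> lam n \<le> lam 1"
    and lam_nonneg: "\<And>n. n \<in> {1..r} \<Longrightarrow> 0 \<le> lam n"
    and norm_le: "\<And>C. C \<in> R \<Longrightarrow> (\<Sum>n=1..r. (c n C)\<^sup>2) \<le> 1"
  shows "(\<Sum>n=1..r. lam n * (\<Prod>C\<in>R. c n C)) \<le> lam 1"
proof -
  have coeff_le: "\<bar>c n C\<bar> \<le> 1" if "C \<in> R" "n \<in> {1..r}" for C n
  proof -
    have "(c n C)\<^sup>2 \<le> (\<Sum>n=1..r. (c n C)\<^sup>2)"
      using that(2) by (intro member_le_sum) auto
    with norm_le[OF that(1)] have "(c n C)\<^sup>2 \<le> 1"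
      by linarith
    then show ?thesis
      by (simp add: abs_square_le_1)
  qed
  have "(\<Sum>n=1..r. lam n * (\<Prod>C\<in>R. c n C)) \<le> (\<Sum>n=1..r. lam 1 * (((c n C1)\<^sup>2 + (c n C2)\<^sup>2) / 2))"
  proof (rule sum_mono)
    fix n assume n: "n \<in> {1..r}"
    have "lam n * (\<Prod>C\<in>R. c n C) \<le> lam n * (((c n C1)\<^sup>2 + (c n C2)\<^sup>2) / 2)"
      using assms(1-4) coeff_le lam_nonneg[OF n] n
      by (intro mult_left_mono prod_le_mean_square_of_two) auto
    also have "\<dots> \<le> lam 1 * (((c n C1)\<^sup>2 + (c n C2)\<^sup>2) / 2)"
      using lam_le[OF n] by (intro mult_right_mono) auto
    finally show "lam n * (\<Prod>C\<in>R. c n C) \<le> lam 1 * (((c n C1)\<^sup>2 + (c n C2)\<^sup>2) / 2)" .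
  qed
  also have "\<dots> = lam 1 * (((\<Sum>n=1..r. (c n C1)\<^sup>2) + (\<Sum>n=1..r. (c n C2)\<^sup>2)) / 2)"
    by (simp only: sum_distrib_left[symmetric] sum_divide_distrib[symmetric] sum.distrib)
  also have "\<dots> \<le> lam 1"
  proof (rule mult_left_le)
    show "((\<Sum>n=1..r. (c n C1)\<^sup>2) + (\<Sum>n=1..r. (c n C2)\<^sup>2)) / 2 \<le> 1"
      using norm_le[OF assms(2)] norm_le[OF assms(3)] by simp
    show "0 \<le> lam 1"
      using lam_nonneg assms(5) by simp
  qed
  finally show ?thesis .
qed

locale orthonormal_unfolding =
  fixes k :: nat and d :: "nat \<Rightarrow> nat" and \<rho> :: "nat set set"
    and r :: nat and lam :: "nat \<Rightarrow> real" and a :: "nat \<Rightarrow> nat \<Rightarrow> nat \<Rightarrow> real"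
    and A :: "(nat \<Rightarrow> nat) \<Rightarrow> real"
  assumes partition: "partition_on {..<k} \<rho>"
    and not_single_block: "\<rho> \<noteq> {{..<k}}" and order_pos: "0 < k"
    and dims_pos: "\<forall>i<k. 0 < d i"
    and lam_antimono: "\<forall>n m. 1 \<le> n \<longrightarrow> n \<le> m \<longrightarrow> m \<le> r \<longrightarrow> lam m \<le> lam n"
    and lam_nonneg: "\<forall>n. 1 \<le> n \<longrightarrow> n \<le> r \<longrightarrow> 0 \<le> lam n"
    and decomposition: "\<forall>idx\<in>index_set k d. A idx = (\<Sum>n=1..r. lam n * (\<Prod>i<k. a n i (idx i)))"
    and orthonormal: "\<forall>C\<in>\<rho>. \<forall>n\<in>{1..r}. \<forall>m\<in>{1..r}.
      block_inner d C (a n) (a m) = (if n = m then 1 else 0)"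
begin

definition block_indices :: "nat set \<Rightarrow> (nat \<Rightarrow> nat) set" where
  "block_indices C = PiE C (\<lambda>i. {..<d i})"

definition block_factor :: "nat \<Rightarrow> nat set \<Rightarrow> (nat \<Rightarrow> nat) \<Rightarrow> real" where
  "block_factor n C s = (\<Prod>i\<in>C. a n i (s i))"

definition block_coeff :: "nat \<Rightarrow> nat set \<Rightarrow> (nat set \<Rightarrow> (nat \<Rightarrow> nat) \<Rightarrow> real) \<Rightarrow> real" where
  "block_coeff n C x = (\<Sum>s\<in>block_indices C. block_factor n C s * x C s)"

definition unfolded_form :: "(nat set \<Rightarrow> (nat \<Rightarrow> nat) \<Rightarrow> real) \<Rightarrow> real" where
  "unfolded_form x = (\<Sum>t\<in>PiE \<rho> block_indices. A (unfold_idx \<rho> t) * (\<Prod>C\<in>\<rho>. x C (t C)))"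

definition unit_vectors :: "(nat set \<Rightarrow> (nat \<Rightarrow> nat) \<Rightarrow> real) set" where
  "unit_vectors = {x. \<forall>C\<in>\<rho>. (\<Sum>j\<in>block_indices C. (x C j)\<^sup>2) = 1}"

definition top_weight :: real where
  "top_weight = (if r = 0 then 0 else lam 1)"

lemma finite_blocks: "finite \<rho>"
  using finite_elements[OF _ partition] by simp

lemma block_subset: "C \<in> \<rho> \<Longrightarrow> C \<subseteq> {..<k}"
  using partition_onD1[OF partition] by blast

lemma finite_block_indices: "C \<in> \<rho> \<Longrightarrow> finite (block_indices C)"
  using block_subset by (auto simp: block_indices_def intro!: finite_PiE dest: finite_subset)

lemma block_factor_orthonormal:
  assumes "C \<in> \<rho>" "n \<in> {1..r}" "m \<in> {1..r}"
  shows "(\<Sum>s\<in>block_indices C. block_factor n C s * block_factor m C s) = (if n = m then 1 else 0)"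
  using orthonormal assms by (simp add: block_inner_def block_indices_def block_factor_def)

lemma unfolded_form_eq: "unfolded_form x = (\<Sum>n=1..r. lam n * (\<Prod>C\<in>\<rho>. block_coeff n C x))"
proof -
  have "unfolded_form x = (\<Sum>t\<in>PiE \<rho> block_indices. \<Sum>n=1..r. lam n * (\<Prod>C\<in>\<rho>. block_factor n C (t C) * x C (t C)))"
    unfolding unfolded_form_def
  proof (intro sum.cong refl)
    fix t assume t: "t \<in> PiE \<rho> block_indices"
    then have "unfold_idx \<rho> t \<in> index_set k d"
      by (intro unfold_idx_in_index_set[OF partition]) (simp add: block_indices_def[abs_def])
    then show "A (unfold_idx \<rho> t) * (\<Prod>C\<in>\<rho>. x C (t C)) =
        (\<Sum>n=1..r. lam n * (\<Prod>C\<in>\<rho>. block_factor n C (t C) * x C (t C)))"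
      using decomposition prod_unfold_idx[OF partition, of "a _"]
      by (simp add: sum_distrib_left prod.distrib block_factor_def mult_ac)
  qed
  also have "\<dots> = (\<Sum>n=1..r. lam n * (\<Sum>t\<in>PiE \<rho> block_indices. \<Prod>C\<in>\<rho>. block_factor n C (t C) * x C (t C)))"
    by (simp add: sum.swap[of _ "PiE \<rho> block_indices"] sum_distrib_left)
  also have "\<dots> = (\<Sum>n=1..r. lam n * (\<Prod>C\<in>\<rho>. block_coeff n C x))"
    unfolding block_coeff_def by (subst prod_sum_PiE) (auto simp: finite_blocks finite_block_indices)
  finally show ?thesis .
qed

lemma block_coeff_norm_le:
  assumes "x \<in> unit_vectors" and "C \<in> \<rho>"
  shows "(\<Sum>n=1..r. (block_coeff n C x)\<^sup>2) \<le> 1"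
proof -
  have "(\<Sum>n=1..r. (block_coeff n C x)\<^sup>2) \<le> (\<Sum>s\<in>block_indices C. (x C s)\<^sup>2)"
    unfolding block_coeff_def
    by (rule bessel_inequality) (use assms(2) finite_block_indices block_factor_orthonormal in auto)
  with assms show ?thesis
    by (simp add: unit_vectors_def)
qed

lemma unfolded_form_le_top_weight:
  assumes "x \<in> unit_vectors"
  shows "unfolded_form x \<le> top_weight"
proof (cases "r = 0")
  case False
  obtain C1 C2 where "C1 \<in> \<rho>" "C2 \<in> \<rho>" "C1 \<noteq> C2"
    using partition_on_two_blocks[OF partition _ not_single_block] order_pos by blast
  then have "(\<Sum>n=1..r. lam n * (\<Prod>C\<in>\<rho>. block_coeff n C x)) \<le> lam 1"
    using False lam_antimono lam_nonneg block_coeff_norm_le[OF assms]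
    by (intro sum_weighted_prod_le_top_weight[OF finite_blocks]) auto
  with False show ?thesis
    by (simp add: unfolded_form_eq top_weight_def)
next
  case True
  then show ?thesis
    unfolding unfolded_form_eq top_weight_def by simp
qed

lemma top_weight_attained: "\<exists>x\<in>unit_vectors. unfolded_form x = top_weight"
proof (cases "r = 0")
  case True
  define x where "x C s = (if s = restrict (\<lambda>_. 0) C then 1 else (0::real))"
    for C and s :: "nat \<Rightarrow> nat"
  have "x \<in> unit_vectors"
    unfolding unit_vectors_def
  proof (intro CollectI ballI)
    fix C assume C: "C \<in> \<rho>"
    have "restrict (\<lambda>_. 0) C \<in> block_indices C"
      using block_subset[OF C] dims_pos by (auto simp: block_indices_def)
    moreover have "(x C j)\<^sup>2 = (if j = restrict (\<lambda>_. 0) C then 1 else 0)" for j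
      by (simp add: x_def)
    ultimately show "(\<Sum>j\<in>block_indices C. (x C j)\<^sup>2) = 1"
      using finite_block_indices[OF C] by simp
  qed
  moreover have "unfolded_form x = top_weight"
    unfolding unfolded_form_eq top_weight_def using True by simp
  ultimately show ?thesis
    by blast
next
  case False
  then have one: "1 \<in> {1..r}"
    by simp
  define x where "x C = block_factor 1 C" for C
  have unit: "x \<in> unit_vectors"
    using block_factor_orthonormal[OF _ one one] by (simp add: unit_vectors_def x_def power2_eq_square)
  have "\<rho> \<noteq> {}"
    using partition order_pos by (auto simp: partition_on_def)
  then have block_coeff_prod: "(\<Prod>C\<in>\<rho>. block_coeff n C x) = (if n = 1 then 1 else 0)" if "n \<in> {1..r}" for n
    using block_factor_orthonormal[OF _ that one] finite_blocks by (simp add: block_coeff_def x_def card_gt_0_iff)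
  have "unfolded_form x = (\<Sum>n=1..r. lam n * (if n = 1 then 1 else 0))"
    unfolding unfolded_form_eq using block_coeff_prod by (intro sum.cong) auto
  also have "\<dots> = top_weight"
    using False one by (simp add: top_weight_def if_distrib cong: if_cong)
  finally show ?thesis
    using unit by blast
qed

lemma unfold_norm_eq_top_weight: "unfold_norm d \<rho> A = top_weight"
proof -
  have "unfold_norm d \<rho> A = Sup (unfolded_form ` unit_vectors)"
    unfolding unfold_norm_def spectral_norm_def unfolded_form_def unit_vectors_def block_indices_def
    by (rule arg_cong[where f = Sup]) blast
  also have "\<dots> = top_weight"
  proof (rule cSup_eq_maximum)
    show "top_weight \<in> unfolded_form ` unit_vectors"
      using top_weight_attained by force
  qed (use unfolded_form_le_top_weight in blast)
  finally show ?thesis .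
qed

end

theorem theorem5p5:
  fixes k :: nat and d :: "nat \<Rightarrow> nat" and A :: "(nat \<Rightarrow> nat) \<Rightarrow> real"
    and \<pi> \<tau> :: "nat set set"
  assumes "\<pi> \<in> partitions k"
    and "pi_OD k d \<pi> A"
    and "\<tau> \<in> partitions k" and "refines \<pi> \<tau>" and "\<tau> \<noteq> {{..<k}}"
  shows "unfold_norm d \<tau> A = unfold_norm d \<pi> A"
proof -
  have \<pi>: "partition_on {..<k} \<pi>" and \<tau>: "partition_on {..<k} \<tau>"
    using assms(1,3) by (auto simp: partitions_def)
  have coarsening: "Disjoint_Sets.refines {..<k} \<pi> \<tau>"
    using \<pi> \<tau> assms(4) by (simp add: Disjoint_Sets.refines_def Defs.refines_def)
  show ?thesis
  proof (cases "0 < k \<and> (\<forall>i<k. 0 < d i)")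
    case False
    then show ?thesis
      using unfold_norm_degenerate[OF \<pi> \<tau>] by blast
  next
    case shape: True
    obtain r :: nat and lam :: "nat \<Rightarrow> real" and a :: "nat \<Rightarrow> nat \<Rightarrow> nat \<Rightarrow> real"
      where decomposition:
        "\<forall>n m. 1 \<le> n \<longrightarrow> n \<le> m \<longrightarrow> m \<le> r \<longrightarrow> lam m \<le> lam n"
        "\<forall>n. 1 \<le> n \<longrightarrow> n \<le> r \<longrightarrow> 0 \<le> lam n"
        "\<forall>idx\<in>index_set k d. A idx = (\<Sum>n=1..r. lam n * (\<Prod>i<k. a n i (idx i)))"
      and orthonormal: "\<forall>B\<in>\<pi>. \<forall>n\<in>{1..r}. \<forall>m\<in>{1..r}.
        block_inner d B (a n) (a m) = (if n = m then 1 else 0)"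
      using assms(2) unfolding pi_OD_def by blast
    have "\<pi> \<noteq> {{..<k}}"
      using refines_single_block coarsening assms(5) by blast
    then interpret \<pi>: orthonormal_unfolding k d \<pi> r lam a A
      using \<pi> shape decomposition orthonormal by (intro orthonormal_unfolding.intro) auto
    interpret \<tau>: orthonormal_unfolding k d \<tau> r lam a A
      using \<tau> shape assms(5) decomposition
        block_inner_orthonormal_refines[OF coarsening finite_lessThan orthonormal]
      by (intro orthonormal_unfolding.intro) auto
    show ?thesis
      using \<pi>.unfold_norm_eq_top_weight \<tau>.unfold_norm_eq_top_weight by simp
  qed
qed

end
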